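(* For an integer $d\geqslant 1$ and a real $x>0$, let $$W_d(x)=\sum_{\substack{n\geqslant 1\\ \lfloor x/n\rfloor-\lfloor x/(n+1)\rfloor=d}}\bigl\lvert \{x/(n+1)\}-\{x/n\}\bigr\rvert ,$$ and let $$f(d)=\frac{8d+2}3\sqrt{d+1}-\frac{8d-2}3\sqrt{d-1}-4\sqrt{d}.$$ Then for all integers $d>0$ and reals $x>0$, $$W_d(x)=f(d)\sqrt{x}+O(d),$$ with an absolute implied constant.
   Context: For a real number $t$, $\lfloor t\rfloor$ denotes its integer part and $\{t\}=t-\lfloor t\rfloor$ its fractional part. *)

theory Defs
  imports Complex_Main
begin

definition W :: "nat \<Rightarrow> real \<Rightarrow> real" where
  "W d x = (\<Sum>n\<in>{n::nat. n \<ge> 1 \<and> \<lfloor>x / real n\<rfloor> - \<lfloor>x / real (n+1)\<rfloor> = int d}.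
              \<bar>frac (x / real (n+1)) - frac (x / real n)\<bar>)"

definition f :: "nat \<Rightarrow> real" where
  "f d = (8 * real d + 2) / 3 * sqrt (real d + 1) - (8 * real d - 2) / 3 * sqrt (real d - 1)
         - 4 * sqrt (real d)"

end

theory Submission
  imports Defs "HOL-Analysis.Analysis"
begin

text \<open>Put \<open>t\<^sub>n = x / (n (n + 1))\<close> and \<open>D\<^sub>n = \<lfloor>x/n\<rfloor> - \<lfloor>x/(n+1)\<rfloor>\<close>. Then
  \<open>{x/n} - {x/(n+1)} = t\<^sub>n - D\<^sub>n\<close> lies in \<open>(-1, 1)\<close>, so the \<open>n\<close>-th term of \<open>W d x\<close> equals
  \<open>hump d t\<^sub>n + ramp d t\<^sub>n (t\<^sub>n - D\<^sub>n)\<close>, with \<open>hump d t = s (1 - s)\<close> and \<open>ramp d t = t - d\<close> for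
  \<open>s = |t - d| < 1\<close> (both vanish otherwise). The ramp terms are \<open>ramp d t\<^sub>n (v\<^sub>n - v\<^sub>n\<^sub>+\<^sub>1)\<close> with
  \<open>v\<^sub>n = {x/n} \<in> [0, 1)\<close> and \<open>t\<^sub>n\<close> decreasing; as the ramp is a difference of two bounded monotone
  functions, Abel summation bounds their sum by 4. The hump terms form a Riemann sum of
  \<open>z \<mapsto> hump d (x / z\<^sup>2)\<close> with total error \<open>O(d)\<close>; this function has an explicit piecewise
  algebraic primitive, whose value at \<open>\<lfloor>x\<rfloor> + 1\<close> is \<open>f d \<surd>x + O(1)\<close>.\<close>

definition hump :: "nat \<Rightarrow> real \<Rightarrow> real" where
  "hump d t = (if \<bar>t - real d\<bar> < 1 then \<bar>t - real d\<bar> * (1 - \<bar>t - real d\<bar>) else 0)"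

definition ramp :: "nat \<Rightarrow> real \<Rightarrow> real" where
  "ramp d t = (if \<bar>t - real d\<bar> < 1 then t - real d else 0)"

lemma hump_bounds: "0 \<le> hump d t" "hump d t \<le> 1"
  unfolding hump_def by (auto simp: mult_le_one)

lemma hump_eq_0: "real d + 1 \<le> t \<Longrightarrow> hump d t = 0"
  unfolding hump_def by auto

lemma hump_lipschitz: "\<bar>hump d a - hump d b\<bar> \<le> \<bar>a - b\<bar>"
proof -
  define p :: "real \<Rightarrow> real" where "p s = (if s < 1 then s * (1 - s) else 0)" for s
  have p_le: "s * (1 - s) \<le> 1 - s" "0 \<le> s * (1 - s)" if "0 \<le> s" "s < 1" for s :: real
    using that mult_right_mono[of s 1 "1 - s"] by auto
  have "\<bar>p s - p r\<bar> \<le> \<bar>s - r\<bar>" if "0 \<le> s" "0 \<le> r" for s r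
  proof (cases "s < 1 \<and> r < 1")
    case True
    have "p s - p r = (s - r) * (1 - s - r)" using True by (simp add: p_def algebra_simps)
    moreover have "\<bar>1 - s - r\<bar> \<le> 1" using True that by auto
    ultimately show ?thesis by (simp add: abs_mult mult_left_le)
  next
    case False
    then consider "1 \<le> s" "1 \<le> r" | "1 \<le> s" "r < 1" | "s < 1" "1 \<le> r" by linarith
    then show ?thesis
    proof cases
      case 2
      then have "p s - p r = - (r * (1 - r))" by (simp add: p_def)
      then show ?thesis using p_le[OF that(2) 2(2)] 2 by linarith
    next
      case 3
      then have "p s - p r = s * (1 - s)" by (simp add: p_def)
      then show ?thesis using p_le[OF that(1) 3(1)] 3 by linarith
    qed (simp add: p_def)
  qed
  then have "\<bar>hump d a - hump d b\<bar> \<le> \<bar>\<bar>a - real d\<bar> - \<bar>b - real d\<bar>\<bar>"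
    by (simp add: hump_def p_def)
  also have "\<dots> \<le> \<bar>a - b\<bar>" by linarith
  finally show ?thesis .
qed

lemma indicator_dist_eq_hump_ramp:
  fixes t :: real and D :: int
  assumes "\<bar>t - of_int D\<bar> < 1"
  shows "(if D = int d then \<bar>t - real d\<bar> else 0) = hump d t + ramp d t * (t - of_int D)"
proof (cases "\<bar>t - real d\<bar> < 1")
  case False
  then have "D \<noteq> int d" using assms by auto
  then show ?thesis using False unfolding hump_def ramp_def by simp
next
  case True
  then have "of_int D < real d + 2" "of_int D > real d - 2" using assms by auto
  then consider "D = int d" | "D = int d + 1" | "D = int d - 1" by linarith
  then show ?thesis
  proof cases
    case 3
    then have D: "of_int D = real d - 1" by simp
    have "t < real d" using True assms unfolding D by linarith
    then show ?thesis using True 3 unfolding hump_def ramp_def D by (simp add: algebra_simps)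
  qed (use True assms in \<open>auto simp: hump_def ramp_def abs_if algebra_simps\<close>)
qed

lemma floor_diff_term_eq_hump_ramp:
  fixes u w :: real
  shows "(if \<lfloor>u\<rfloor> - \<lfloor>w\<rfloor> = int d then \<bar>frac w - frac u\<bar> else 0)
         = hump d (u - w) + ramp d (u - w) * (frac u - frac w)"
proof -
  define D where "D = \<lfloor>u\<rfloor> - \<lfloor>w\<rfloor>"
  have e: "frac u - frac w = (u - w) - of_int D" unfolding frac_def D_def by simp
  moreover have "\<bar>frac u - frac w\<bar> < 1" using frac_lt_1 frac_ge_0 by (smt (verit))
  ultimately have "(if D = int d then \<bar>u - w - real d\<bar> else 0)
                   = hump d (u - w) + ramp d (u - w) * (u - w - of_int D)"
    by (intro indicator_dist_eq_hump_ramp) simp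
  then show ?thesis using e unfolding D_def[symmetric] by (auto simp: abs_minus_commute)
qed

lemma W_eq_hump_ramp_sum:
  assumes d: "d \<ge> 1" and x: "x > 0"
  defines "t \<equiv> \<lambda>m. x / (real (Suc m) * real (Suc (Suc m)))"
  shows "W d x = (\<Sum>m<nat \<lfloor>x\<rfloor>. hump d (t m)
                   + ramp d (t m) * (frac (x / real (Suc m)) - frac (x / real (Suc (Suc m)))))"
proof -
  define N where "N = nat \<lfloor>x\<rfloor>"
  define S where "S = {n::nat. n \<ge> 1 \<and> \<lfloor>x / real n\<rfloor> - \<lfloor>x / real (n+1)\<rfloor> = int d}"
  define g where "g n = (if \<lfloor>x / real n\<rfloor> - \<lfloor>x / real (Suc n)\<rfloor> = int d
                          then \<bar>frac (x / real (Suc n)) - frac (x / real n)\<bar> else 0)" for n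
  have "S \<subseteq> {1..N}"
  proof
    fix n assume "n \<in> S"
    then have n: "n \<ge> 1" and D: "\<lfloor>x / real n\<rfloor> - \<lfloor>x / real (n+1)\<rfloor> = int d"
      unfolding S_def by auto
    have "\<lfloor>x / real (n+1)\<rfloor> \<ge> 0" using x by simp
    then have "x / real n \<ge> 1" using D d by linarith
    then have "real n \<le> x" using n by (simp add: field_simps)
    then show "n \<in> {1..N}" using n unfolding N_def by (simp add: le_nat_floor)
  qed
  then have "W d x = sum g {1..N}"
    unfolding W_def S_def[symmetric] by (intro sum.mono_neutral_cong_left) (auto simp: g_def S_def)
  also have "\<dots> = (\<Sum>m<N. g (Suc m))"
    using sum.atLeast1_atMost_eq[of g N] by simp
  also have "\<dots> = (\<Sum>m<N. hump d (t m)
                   + ramp d (t m) * (frac (x / real (Suc m)) - frac (x / real (Suc (Suc m)))))"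
  proof (rule sum.cong[OF refl])
    fix m
    have "x / real (Suc m) - x / real (Suc (Suc m)) = t m"
      unfolding t_def by (simp add: field_simps)
    then show "g (Suc m) = hump d (t m)
                 + ramp d (t m) * (frac (x / real (Suc m)) - frac (x / real (Suc (Suc m))))"
      unfolding g_def floor_diff_term_eq_hump_ramp by simp
  qed
  finally show ?thesis unfolding N_def .
qed

lemma abel_sum_antitone_bound:
  fixes a v :: "nat \<Rightarrow> real"
  assumes a_antitone: "\<And>m. a (Suc m) \<le> a m" and a_bounds: "\<And>m. 0 \<le> a m" "\<And>m. a m \<le> M"
    and v_bounds: "\<And>m. 0 \<le> v m" "\<And>m. v m \<le> 1"
  shows "\<bar>\<Sum>m<N. a m * (v m - v (Suc m))\<bar> \<le> M"
proof -
  have "a 0 * v 0 - (a 0 - a N) \<le> (\<Sum>m<N. a m * (v m - v (Suc m))) + a N * v N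
        \<and> (\<Sum>m<N. a m * (v m - v (Suc m))) + a N * v N \<le> a 0 * v 0"
  proof (induction N)
    case (Suc N)
    have "0 \<le> (a N - a (Suc N)) * v (Suc N)" "(a N - a (Suc N)) * v (Suc N) \<le> a N - a (Suc N)"
      using a_antitone[of N] v_bounds[of "Suc N"] by (simp_all add: mult_left_le)
    then show ?case using Suc.IH by (simp add: algebra_simps)
  qed simp
  moreover have av: "0 \<le> a n * v n" "a n * v n \<le> a n" for n
    using a_bounds v_bounds by (simp_all add: mult_left_le)
  ultimately show ?thesis
    using av[of 0] av[of N] a_bounds(2)[of 0] a_bounds(2)[of N] a_bounds(1)[of N] by linarith
qed

lemma ramp_abel_sum_bound:
  fixes t v :: "nat \<Rightarrow> real"
  assumes t_antitone: "\<And>m. t (Suc m) \<le> t m" and v_bounds: "\<And>m. 0 \<le> v m" "\<And>m. v m \<le> 1"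
  shows "\<bar>\<Sum>m<N. ramp d (t m) * (v m - v (Suc m))\<bar> \<le> 4"
proof -
  define clip where "clip s = max (-1) (min 1 (s - real d)) + 1" for s
  define step where "step s = clip s - ramp d s" for s
  have mono: "clip s \<le> clip s'" "step s \<le> step s'" if "s \<le> s'" for s s'
    using that by (auto simp: clip_def step_def ramp_def abs_if)
  have bounds: "0 \<le> clip s" "clip s \<le> 2" "0 \<le> step s" "step s \<le> 2" for s
    by (auto simp: clip_def step_def ramp_def abs_if)
  have "\<bar>\<Sum>m<N. clip (t m) * (v m - v (Suc m))\<bar> \<le> 2"
    by (rule abel_sum_antitone_bound) (use mono t_antitone bounds v_bounds in auto)
  moreover have "\<bar>\<Sum>m<N. step (t m) * (v m - v (Suc m))\<bar> \<le> 2"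
    by (rule abel_sum_antitone_bound) (use mono t_antitone bounds v_bounds in auto)
  moreover have "(\<Sum>m<N. ramp d (t m) * (v m - v (Suc m)))
      = (\<Sum>m<N. clip (t m) * (v m - v (Suc m))) - (\<Sum>m<N. step (t m) * (v m - v (Suc m)))"
    by (simp add: step_def sum_subtractf[symmetric] algebra_simps)
  ultimately show ?thesis by linarith
qed

definition z_plus :: "nat \<Rightarrow> real \<Rightarrow> real" where
  "z_plus d x = sqrt (x / (real d + 1))"

definition z_mid :: "nat \<Rightarrow> real \<Rightarrow> real" where
  "z_mid d x = sqrt (x / real d)"

text \<open>For \<open>d = 1\<close> the hump of \<open>x / z\<^sup>2\<close> does not vanish for large \<open>z\<close>; the cut-off \<open>x + 2\<close>
  merely lies beyond every \<open>z \<le> \<lfloor>x\<rfloor> + 1\<close> at which the primitive is evaluated.\<close>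

definition z_minus :: "nat \<Rightarrow> real \<Rightarrow> real" where
  "z_minus d x = (if d = 1 then x + 2 else sqrt (x / (real d - 1)))"

definition prim_plus :: "nat \<Rightarrow> real \<Rightarrow> real \<Rightarrow> real" where
  "prim_plus d x z = x^2 / (3 * z^3) - (2 * real d + 1) * x / z - real d * (real d + 1) * z"

definition prim_minus :: "nat \<Rightarrow> real \<Rightarrow> real \<Rightarrow> real" where
  "prim_minus d x z = x^2 / (3 * z^3) - (2 * real d - 1) * x / z - real d * (real d - 1) * z"

definition hump_prim_offset :: "nat \<Rightarrow> real \<Rightarrow> real" where
  "hump_prim_offset d x = prim_plus d x (z_mid d x) - prim_plus d x (z_plus d x) - prim_minus d x (z_mid d x)"

definition hump_prim :: "nat \<Rightarrow> real \<Rightarrow> real \<Rightarrow> real" where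
  "hump_prim d x z =
     (if z \<le> z_plus d x then 0
      else if z \<le> z_mid d x then prim_plus d x z - prim_plus d x (z_plus d x)
      else if z \<le> z_minus d x then prim_minus d x z + hump_prim_offset d x
      else prim_minus d x (z_minus d x) + hump_prim_offset d x)"

lemma sqrt_div_less_iff:
  fixes x c z :: real assumes "c > 0" "z > 0"
  shows "sqrt (x / c) < z \<longleftrightarrow> x / z^2 < c"
proof -
  have "sqrt (x / c) < z \<longleftrightarrow> x / c < z^2"
    using assms real_sqrt_less_iff[of "x / c" "z^2"] by simp
  also have "\<dots> \<longleftrightarrow> x / z^2 < c" using assms by (simp add: field_simps)
  finally show ?thesis .
qed

lemma less_sqrt_div_iff:
  fixes x c z :: real assumes "c > 0" "z > 0"
  shows "z < sqrt (x / c) \<longleftrightarrow> c < x / z^2"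
proof -
  have "z < sqrt (x / c) \<longleftrightarrow> z^2 < x / c"
    using assms real_sqrt_less_iff[of "z^2" "x / c"] by simp
  also have "\<dots> \<longleftrightarrow> c < x / z^2" using assms by (simp add: field_simps)
  finally show ?thesis .
qed

lemma z_order:
  assumes "d \<ge> 1" "x > 0"
  shows "0 < z_plus d x" "z_plus d x < z_mid d x" "z_mid d x < z_minus d x"
proof -
  show "0 < z_plus d x" "z_plus d x < z_mid d x"
    unfolding z_plus_def z_mid_def using assms by (simp_all add: frac_less2)
  show "z_mid d x < z_minus d x"
  proof (cases "d = 1")
    case True
    have "sqrt x < x + 2"
    proof (cases "x \<le> 1")
      case False
      then show ?thesis using real_sqrt_less_iff[of x "x^2"] by (simp add: power2_eq_square)
    qed (use assms real_sqrt_le_1_iff[of x] in linarith)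
    then show ?thesis unfolding z_mid_def z_minus_def using True by simp
  next
    case False
    then show ?thesis unfolding z_mid_def z_minus_def using assms by (simp add: frac_less2)
  qed
qed

lemma prim_plus_deriv: "z \<noteq> 0 \<Longrightarrow>
  (prim_plus d x has_real_derivative (real d + 1 - x / z^2) * (x / z^2 - real d)) (at z)"
  unfolding prim_plus_def
  by (rule derivative_eq_intros refl | simp)+
     (simp add: field_simps power2_eq_square power3_eq_cube power4_eq_xxxx eval_nat_numeral)

lemma prim_minus_deriv: "z \<noteq> 0 \<Longrightarrow>
  (prim_minus d x has_real_derivative (real d - x / z^2) * (x / z^2 - real d + 1)) (at z)"
  unfolding prim_minus_def
  by (rule derivative_eq_intros refl | simp)+
     (simp add: field_simps power2_eq_square power3_eq_cube power4_eq_xxxx eval_nat_numeral)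

lemma hump_inverse_square_pieces:
  assumes d: "d \<ge> 1" and x: "x > 0" and z: "z > 0"
  shows "z < z_plus d x \<Longrightarrow> hump d (x / z^2) = 0"
    and "z_plus d x < z \<Longrightarrow> z < z_mid d x \<Longrightarrow>
           hump d (x / z^2) = (real d + 1 - x / z^2) * (x / z^2 - real d)"
    and "z_mid d x < z \<Longrightarrow> z < z_minus d x \<Longrightarrow>
           hump d (x / z^2) = (real d - x / z^2) * (x / z^2 - real d + 1)"
    and "d \<ge> 2 \<Longrightarrow> z_minus d x < z \<Longrightarrow> hump d (x / z^2) = 0"
proof -
  have d0: "real d > 0" using d by simp
  show "z < z_plus d x \<Longrightarrow> hump d (x / z^2) = 0"
    using less_sqrt_div_iff[of "real d + 1" z x] z by (simp add: z_plus_def hump_eq_0)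
  show "hump d (x / z^2) = (real d + 1 - x / z^2) * (x / z^2 - real d)"
    if "z_plus d x < z" "z < z_mid d x"
  proof -
    have "x / z^2 < real d + 1" "real d < x / z^2"
      using that sqrt_div_less_iff[of "real d + 1" z x] less_sqrt_div_iff[of "real d" z x] z d0
      by (simp_all add: z_plus_def z_mid_def)
    then show ?thesis by (simp add: hump_def algebra_simps)
  qed
  show "hump d (x / z^2) = (real d - x / z^2) * (x / z^2 - real d + 1)"
    if "z_mid d x < z" "z < z_minus d x"
  proof -
    have "x / z^2 < real d"
      using that sqrt_div_less_iff[of "real d" z x] z d0 by (simp add: z_mid_def)
    moreover have "real d - 1 < x / z^2"
      using that less_sqrt_div_iff[of "real d - 1" z x] x z d
      by (cases "d = 1") (simp_all add: z_minus_def)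
    ultimately show ?thesis by (simp add: hump_def algebra_simps)
  qed
  show "d \<ge> 2 \<Longrightarrow> z_minus d x < z \<Longrightarrow> hump d (x / z^2) = 0"
    using sqrt_div_less_iff[of "real d - 1" z x] z by (simp add: z_minus_def hump_def)
qed

lemma hump_prim_deriv:
  assumes d: "d \<ge> 1" and x: "x > 0" and z: "z > 0"
    and z_ne: "z \<notin> {z_plus d x, z_mid d x, z_minus d x}" and below: "2 \<le> d \<or> z < z_minus d x"
  shows "(hump_prim d x has_real_derivative hump d (x / z^2)) (at z)"
proof -
  note order = z_order[OF d x] and pieces = hump_inverse_square_pieces[OF d x z]
  consider "z < z_plus d x" | "z_plus d x < z" "z < z_mid d x" | "z_mid d x < z" "z < z_minus d x"
    | "z_minus d x < z"
    using z_ne by (auto simp: not_less) (metis less_linear)+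
  then show ?thesis
  proof cases
    case 1
    have "((\<lambda>w. 0) has_real_derivative 0) (at z)" by simp
    then have "(hump_prim d x has_real_derivative 0) (at z)"
      by (rule has_field_derivative_transform_within_open[where S="{..<z_plus d x}"])
         (use 1 in \<open>auto simp: hump_prim_def\<close>)
    then show ?thesis using pieces(1)[OF 1] by simp
  next
    case 2
    have "((\<lambda>w. prim_plus d x w - prim_plus d x (z_plus d x)) has_real_derivative
             (real d + 1 - x / z^2) * (x / z^2 - real d)) (at z)"
      using prim_plus_deriv[of z d x] z by (auto intro!: derivative_eq_intros)
    then show ?thesis
      by (auto intro: has_field_derivative_transform_within_open[where S="{z_plus d x<..<z_mid d x}"]
               simp: 2 pieces(2) hump_prim_def)
  next
    case 3
    have "((\<lambda>w. prim_minus d x w + hump_prim_offset d x) has_real_derivative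
             (real d - x / z^2) * (x / z^2 - real d + 1)) (at z)"
      using prim_minus_deriv[of z d x] z by (auto intro!: derivative_eq_intros)
    then show ?thesis
      using order
      by (auto intro: has_field_derivative_transform_within_open[where S="{z_mid d x<..<z_minus d x}"]
               simp: 3 pieces(3) hump_prim_def)
  next
    case 4
    then have "d \<ge> 2" using below by auto
    have "((\<lambda>w. prim_minus d x (z_minus d x) + hump_prim_offset d x) has_real_derivative 0) (at z)"
      by simp
    then have "(hump_prim d x has_real_derivative 0) (at z)"
      by (rule has_field_derivative_transform_within_open[where S="{z_minus d x<..}"])
         (use 4 order in \<open>auto simp: hump_prim_def\<close>)
    then show ?thesis using pieces(4)[OF \<open>d \<ge> 2\<close> 4] by simp
  qed
qed

lemma hump_prim_continuous_on:
  assumes d: "d \<ge> 1" and x: "x > 0" and a: "a > 0"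
  shows "continuous_on {a..b} (hump_prim d x)"
proof -
  note order = z_order[OF d x]
  have prims: "continuous_on {a..b} (prim_plus d x)" "continuous_on {a..b} (prim_minus d x)"
    using a by (auto intro!: continuous_intros simp: prim_plus_def prim_minus_def)
  have upper: "continuous_on {z \<in> {a..b}. z_mid d x \<le> z}
      (\<lambda>z. if z \<le> z_minus d x then prim_minus d x z + hump_prim_offset d x
           else prim_minus d x (z_minus d x) + hump_prim_offset d x)"
    by (intro continuous_on_cases_le[where h="\<lambda>z. z"] continuous_intros)
       (auto intro: continuous_on_subset[OF prims(2)])
  have middle: "continuous_on {z \<in> {a..b}. z_plus d x \<le> z}
      (\<lambda>z. if z \<le> z_mid d x then prim_plus d x z - prim_plus d x (z_plus d x)
           else if z \<le> z_minus d x then prim_minus d x z + hump_prim_offset d x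
           else prim_minus d x (z_minus d x) + hump_prim_offset d x)"
    apply (rule continuous_on_cases_le[where h="\<lambda>z. z"])
    subgoal by (auto intro!: continuous_intros intro: continuous_on_subset[OF prims(1)])
    subgoal by (rule continuous_on_subset[OF upper]) auto
    subgoal by (rule continuous_intros)
    subgoal using order by (auto simp: hump_prim_offset_def)
    done
  show ?thesis unfolding hump_prim_def
    apply (rule continuous_on_cases_le[where h="\<lambda>z. z"])
    subgoal by (rule continuous_intros)
    subgoal by (rule continuous_on_subset[OF middle]) auto
    subgoal by (rule continuous_intros)
    subgoal using order by auto
    done
qed

lemma hump_prim_has_integral:
  assumes d: "d \<ge> 1" and x: "x > 0" and a: "a > 0" and ab: "a \<le> b"
    and below: "2 \<le> d \<or> b < z_minus d x"
  shows "((\<lambda>z. hump d (x / z^2)) has_integral (hump_prim d x b - hump_prim d x a)) {a..b}"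
proof (rule fundamental_theorem_of_calculus_interior_strong
         [where S="{z_plus d x, z_mid d x, z_minus d x}"])
  show "continuous_on {a..b} (hump_prim d x)" by (rule hump_prim_continuous_on[OF d x a])
  fix z assume "z \<in> {a<..<b} - {z_plus d x, z_mid d x, z_minus d x}"
  then have "(hump_prim d x has_real_derivative hump d (x / z^2)) (at z)"
    using a below by (intro hump_prim_deriv[OF d x]) auto
  then show "(hump_prim d x has_vector_derivative hump d (x / z^2)) (at z)"
    by (simp add: has_real_derivative_iff_has_vector_derivative)
qed (use ab in auto)

lemma prim_plus_at_root:
  assumes s: "s > 0" and r: "r > 0" and r2: "r^2 = real d + 1"
  shows "prim_plus d (s^2) (s / r) = - s * r * (8 * real d + 2) / 3"
proof -
  have "prim_plus d (s^2) (s / r) = s * (r^2 * r / 3 - (2 * real d + 1) * r - real d * r)"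
    unfolding prim_plus_def r2[symmetric] using s r
    by (simp add: field_simps power2_eq_square power3_eq_cube eval_nat_numeral)
  then show ?thesis unfolding r2 by (simp add: field_simps)
qed

lemma prim_minus_at_root:
  assumes s: "s > 0" and r: "r > 0" and r2: "r^2 = real d - 1"
  shows "prim_minus d (s^2) (s / r) = - s * r * (8 * real d - 2) / 3"
proof -
  have "prim_minus d (s^2) (s / r) = s * (r^2 * r / 3 - (2 * real d - 1) * r - real d * r)"
    unfolding prim_minus_def r2[symmetric] using s r
    by (simp add: field_simps power2_eq_square power3_eq_cube eval_nat_numeral)
  then show ?thesis unfolding r2 by (simp add: field_simps)
qed

lemma prim_plus_minus_diff: "z \<noteq> 0 \<Longrightarrow> prim_plus d x z - prim_minus d x z = - 2 * x / z - 2 * real d * z"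
  unfolding prim_plus_def prim_minus_def by (simp add: field_simps)

lemma hump_prim_offset_eq:
  assumes d: "d \<ge> 1" and x: "x > 0"
  shows "hump_prim_offset d x = sqrt x * ((8 * real d + 2) / 3 * sqrt (real d + 1) - 4 * sqrt (real d))"
proof -
  define s where "s = sqrt x"
  have s: "s > 0" "x = s^2" using x unfolding s_def by simp_all
  have r: "sqrt (real d + 1) > 0" "sqrt (real d) > 0" using d by simp_all
  have "prim_plus d (s^2) (s / sqrt (real d + 1)) = - s * sqrt (real d + 1) * (8 * real d + 2) / 3"
    by (rule prim_plus_at_root[OF s(1) r(1)]) simp
  moreover have z: "z_plus d x = s / sqrt (real d + 1)" "z_mid d x = s / sqrt (real d)"
    unfolding z_plus_def z_mid_def s_def by (simp_all add: real_sqrt_divide)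
  ultimately have plus: "prim_plus d x (z_plus d x) = - s * sqrt (real d + 1) * (8 * real d + 2) / 3"
    using s(2) by simp
  have "prim_plus d x (z_mid d x) - prim_minus d x (z_mid d x)
      = - 2 * s^2 / (s / sqrt (real d)) - 2 * (sqrt (real d))^2 * (s / sqrt (real d))"
    using s r unfolding z by (subst prim_plus_minus_diff) (simp_all add: s(2))
  also have "\<dots> = - 4 * s * sqrt (real d)"
    using s r by (simp add: field_simps power2_eq_square)
  finally show ?thesis
    using plus unfolding hump_prim_offset_def s_def[symmetric] by (simp add: algebra_simps)
qed

lemma hump_prim_beyond_z_minus:
  assumes d: "d \<ge> 2" and x: "x > 0"
  shows "prim_minus d x (z_minus d x) + hump_prim_offset d x = f d * sqrt x"
proof -
  define s where "s = sqrt x"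
  have s: "s > 0" "x = s^2" using x unfolding s_def by simp_all
  have r: "sqrt (real d - 1) > 0" using d by simp
  have "prim_minus d (s^2) (s / sqrt (real d - 1)) = - s * sqrt (real d - 1) * (8 * real d - 2) / 3"
    by (rule prim_minus_at_root[OF s(1) r]) (use d in simp)
  moreover have "z_minus d x = s / sqrt (real d - 1)"
    unfolding z_minus_def s_def using d by (simp add: real_sqrt_divide)
  ultimately have minus: "prim_minus d x (z_minus d x) = - s * sqrt (real d - 1) * (8 * real d - 2) / 3"
    using s(2) by simp
  have "d \<ge> 1" using d by simp
  then show ?thesis
    unfolding hump_prim_offset_eq[OF \<open>d \<ge> 1\<close> x] f_def s_def[symmetric] minus
    by (simp add: field_simps)
qed

lemma hump_prim_at_1:
  assumes d: "d \<ge> 1" and x: "x > 0"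
  shows "\<bar>hump_prim d x 1\<bar> \<le> 1"
proof (cases "1 \<le> z_plus d x")
  case True then show ?thesis unfolding hump_prim_def by simp
next
  case False
  define a where "a = z_plus d x"
  have a: "0 < a" "a \<le> 1" using z_order[OF d x] False unfolding a_def by auto
  have I: "((\<lambda>z. hump d (x / z^2)) has_integral (hump_prim d x 1 - hump_prim d x a)) (cbox a 1)"
    unfolding cbox_interval
    by (rule hump_prim_has_integral[OF d x a]) (use x d in \<open>auto simp: z_minus_def\<close>)
  have bound: "norm (hump d (x / z^2)) \<le> 1" for z using hump_bounds[of d "x / z^2"] by simp
  have "hump_prim d x a = 0" unfolding hump_prim_def a_def by simp
  with has_integral_bound[OF zero_le_one I bound] a show ?thesis
    by (simp add: cbox_interval content_real)
qed

lemma hump_prim_at_end: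
  assumes d: "d \<ge> 1" and x: "x > 0"
  shows "\<bar>hump_prim d x (real (nat \<lfloor>x\<rfloor>) + 1) - f d * sqrt x\<bar> \<le> 2"
proof -
  define Z where "Z = real (nat \<lfloor>x\<rfloor>) + 1"
  have Z: "x < Z" "Z \<le> x + 1" "1 \<le> Z" unfolding Z_def using x by linarith+
  have "Z^1 \<le> Z^2" using Z by (intro power_increasing) auto
  then have xZ: "x / Z^2 < 1" using Z by simp
  note order = z_order[OF d x]
  show ?thesis
  proof (cases "d = 1")
    case True
    have "z_mid d x < Z" "Z \<le> z_minus d x"
      using sqrt_div_less_iff[of 1 Z x] xZ Z True by (auto simp: z_mid_def z_minus_def)
    then have at_Z: "hump_prim d x Z = prim_minus d x Z + f d * sqrt x"
      using order hump_prim_offset_eq[OF d x] True by (simp add: hump_prim_def f_def)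
    have "x^2 \<le> 3 * Z^3"
    proof -
      have "x^2 \<le> Z^2" using x Z by (intro power_mono) auto
      also have "\<dots> \<le> Z^3" using Z by (intro power_increasing) auto
      finally show ?thesis using zero_le_power[of Z 3] Z by linarith
    qed
    then have "0 \<le> x^2 / (3 * Z^3)" "x^2 / (3 * Z^3) \<le> 1" "0 \<le> x / Z" "x / Z \<le> 1"
      using x Z by (simp_all add: pos_divide_le_eq)
    then have "\<bar>prim_minus d x Z\<bar> \<le> 2" unfolding prim_minus_def True by simp
    then show ?thesis unfolding Z_def[symmetric] at_Z by simp
  next
    case False
    then have "d \<ge> 2" "real d \<ge> 2" using d by simp_all
    moreover have "x / Z^2 < real d - 1"
      using xZ \<open>real d \<ge> 2\<close> by linarith
    ultimately have "z_minus d x < Z"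
      using sqrt_div_less_iff[of "real d - 1" Z x] Z by (simp add: z_minus_def)
    then show ?thesis
      using order hump_prim_beyond_z_minus[OF \<open>d \<ge> 2\<close> x] by (simp add: hump_prim_def Z_def)
  qed
qed

lemma hump_midpoint_shift:
  assumes n: "n \<ge> 1" and x: "x > 0"
  shows "\<bar>hump d (x / (real n * real (n+1))) - hump d (x / (real n + 1/2)^2)\<bar>
         \<le> (real d + 1) * (1 / real n - 1 / real (n+1))"
proof -
  define q where "q = real n * real (n+1)"
  define a where "a = x / q"
  define b where "b = x / (real n + 1/2)^2"
  have "q = real n * real n + real n" "real n \<ge> 1" unfolding q_def using n by (simp_all add: algebra_simps)
  then have q: "q \<ge> 1" "(real n + 1/2)^2 = q + 1/4" "1 / real n - 1 / real (n+1) = 1 / q"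
    using zero_le_square[of "real n"] by (linarith, simp_all add: power2_eq_square field_simps)
  have b0: "b \<ge> 0" unfolding b_def using x by simp
  have "b = 4 * x / (4 * q + 1)" unfolding b_def q(2) by (simp add: field_simps)
  then have ab: "a = b + b / (4 * q)" unfolding a_def using q(1) by (simp add: field_simps)
  show ?thesis
  proof (cases "b \<ge> real d + 1")
    case True
    moreover have "b / (4 * q) \<ge> 0" using b0 q by simp
    ultimately have "a \<ge> real d + 1" using ab by linarith
    then show ?thesis using True hump_eq_0 q
      unfolding a_def[symmetric] b_def[symmetric] q_def[symmetric] by simp
  next
    case False
    have "\<bar>hump d a - hump d b\<bar> \<le> b / (4 * q)" using hump_lipschitz[of d a b] ab b0 q by simp
    also have "\<dots> \<le> (real d + 1) / q" using False q by (simp add: field_simps)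
    finally show ?thesis unfolding a_def b_def q_def q(3)[unfolded q_def] by simp
  qed
qed

definition step_bound :: "nat \<Rightarrow> real \<Rightarrow> real \<Rightarrow> real" where
  "step_bound d x y = min (x / y^2) (4 * (real d + 1))"

lemma inverse_square_antimono:
  fixes x a b :: real assumes "x \<ge> 0" "0 < a" "a \<le> b"
  shows "x / b^2 \<le> x / a^2"
  using assms by (intro divide_left_mono power_mono) auto

text \<open>On \<open>[n, n + 1]\<close> the hump of \<open>x / z\<^sup>2\<close> moves by at most \<open>x / n\<^sup>2 - x / (n + 1)\<^sup>2\<close>, and it
  vanishes unless \<open>x / n\<^sup>2 < 4 (d + 1)\<close>; hence the cap in \<open>step_bound\<close>.\<close>

lemma hump_prim_step_midpoint:
  assumes d: "d \<ge> 1" and x: "x > 0" and n: "n \<ge> 1"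
    and below: "2 \<le> d \<or> real n + 1 < z_minus d x"
  shows "\<bar>hump_prim d x (real n + 1) - hump_prim d x (real n) - hump d (x / (real n + 1/2)^2)\<bar>
         \<le> step_bound d x (real n) - step_bound d x (real n + 1)"
proof -
  define c where "c = hump d (x / (real n + 1/2)^2)"
  define B where "B = step_bound d x (real n) - step_bound d x (real n + 1)"
  have rn: "real n \<ge> 1" using n by simp
  have "((\<lambda>z. hump d (x / z^2)) has_integral (hump_prim d x (real n + 1) - hump_prim d x (real n)))
          {real n..real n + 1}"
    by (rule hump_prim_has_integral[OF d x]) (use rn below in auto)
  from has_integral_diff[OF this has_integral_const_real[of c "real n" "real n + 1"]]
  have I: "((\<lambda>z. hump d (x / z^2) - c) has_integral
             (hump_prim d x (real n + 1) - hump_prim d x (real n) - c)) (cbox (real n) (real n + 1))"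
    by (simp add: cbox_interval content_real)
  have far: "x / (real n + 1)^2 \<le> x / (real n)^2"
    by (rule inverse_square_antimono) (use x rn in auto)
  then have B0: "0 \<le> B" unfolding B_def step_bound_def by linarith
  have "norm (hump d (x / z^2) - c) \<le> B" if "z \<in> cbox (real n) (real n + 1)" for z
  proof -
    have z: "real n \<le> z" "z \<le> real n + 1" using that by (auto simp: cbox_interval)
    have m: "x / (real n + 1)^2 \<le> x / z^2" "x / z^2 \<le> x / (real n)^2"
      "x / (real n + 1)^2 \<le> x / (real n + 1/2)^2" "x / (real n + 1/2)^2 \<le> x / (real n)^2"
      by (rule inverse_square_antimono; use x rn z in simp)+
    show ?thesis
    proof (cases "x / (real n + 1)^2 \<ge> real d + 1")
      case True
      then have "hump d (x / z^2) = 0" "c = 0" using m unfolding c_def by (simp_all add: hump_eq_0)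
      then show ?thesis using B0 by simp
    next
      case False
      have "(real n + 1)^2 = real n * real n + 2 * real n + 1" "4 * (real n)^2 = 4 * (real n * real n)"
        by (simp_all add: power2_eq_square algebra_simps)
      then have "(real n + 1)^2 \<le> 4 * (real n)^2"
        using mult_right_mono[OF rn, of "real n"] rn by linarith
      then have "x / (real n)^2 \<le> 4 * (x / (real n + 1)^2)"
        using x rn by (simp add: field_simps)
      moreover have "4 * (x / (real n + 1)^2) < 4 * (real d + 1)" using False by simp
      ultimately have "x / (real n)^2 < 4 * (real d + 1)" by linarith
      then have "B = x / (real n)^2 - x / (real n + 1)^2"
        unfolding B_def step_bound_def using False by auto
      moreover have "\<bar>hump d (x / z^2) - c\<bar> \<le> \<bar>x / z^2 - x / (real n + 1/2)^2\<bar>"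
        unfolding c_def by (rule hump_lipschitz)
      ultimately show ?thesis using m by simp
    qed
  qed
  from has_integral_bound[OF B0 I this]
  show ?thesis unfolding c_def B_def by (simp add: content_real)
qed

lemma hump_sum_midpoint_shift:
  assumes x: "x > 0"
  shows "\<bar>(\<Sum>m<N. hump d (x / (real (Suc m) * real (Suc (Suc m)))))
          - (\<Sum>m<N. hump d (x / (real (Suc m) + 1/2)^2))\<bar> \<le> real d + 1"
proof -
  have "\<bar>(\<Sum>m<N. hump d (x / (real (Suc m) * real (Suc (Suc m)))))
          - (\<Sum>m<N. hump d (x / (real (Suc m) + 1/2)^2))\<bar>
      \<le> (\<Sum>m<N. \<bar>hump d (x / (real (Suc m) * real (Suc (Suc m)))) - hump d (x / (real (Suc m) + 1/2)^2)\<bar>)"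
    by (simp only: sum_subtractf[symmetric] sum_abs)
  also have "\<dots> \<le> (\<Sum>m<N. (real d + 1) * (1 / real (Suc m) - 1 / real (Suc (Suc m))))"
    by (rule sum_mono) (use hump_midpoint_shift[of "Suc _" x d] x in simp)
  also have "\<dots> = (real d + 1) * (1 - 1 / real (Suc N))"
    using sum_lessThan_telescope'[of "\<lambda>m. 1 / real (Suc m)" N] by (simp add: sum_distrib_left[symmetric])
  also have "\<dots> \<le> real d + 1" by simp
  finally show ?thesis .
qed

lemma hump_sum_integral_approx:
  assumes d: "d \<ge> 1" and x: "x > 0" and N: "real N \<le> x"
  shows "\<bar>(\<Sum>m<N. hump d (x / (real (Suc m) + 1/2)^2))
          - (hump_prim d x (real N + 1) - hump_prim d x 1)\<bar> \<le> 4 * (real d + 1)"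
proof -
  have "hump_prim d x (real N + 1) - hump_prim d x 1
      = (\<Sum>m<N. hump_prim d x (real (Suc m) + 1) - hump_prim d x (real (Suc m)))"
    using sum_lessThan_telescope[of "\<lambda>m. hump_prim d x (real (Suc m))" N] by (simp add: add.commute)
  then have "\<bar>(\<Sum>m<N. hump d (x / (real (Suc m) + 1/2)^2))
          - (hump_prim d x (real N + 1) - hump_prim d x 1)\<bar>
      = \<bar>\<Sum>m<N. hump_prim d x (real (Suc m) + 1) - hump_prim d x (real (Suc m))
                  - hump d (x / (real (Suc m) + 1/2)^2)\<bar>"
    by (subst abs_minus_commute) (simp add: sum_subtractf)
  also have "\<dots> \<le> (\<Sum>m<N. \<bar>hump_prim d x (real (Suc m) + 1) - hump_prim d x (real (Suc m))
                  - hump d (x / (real (Suc m) + 1/2)^2)\<bar>)"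
    by (rule sum_abs)
  also have "\<dots> \<le> (\<Sum>m<N. step_bound d x (real (Suc m)) - step_bound d x (real (Suc m) + 1))"
  proof (rule sum_mono)
    fix m assume "m \<in> {..<N}"
    then have "2 \<le> d \<or> real (Suc m) + 1 < z_minus d x" using N d by (auto simp: z_minus_def)
    then show "\<bar>hump_prim d x (real (Suc m) + 1) - hump_prim d x (real (Suc m))
                 - hump d (x / (real (Suc m) + 1/2)^2)\<bar>
               \<le> step_bound d x (real (Suc m)) - step_bound d x (real (Suc m) + 1)"
      using hump_prim_step_midpoint[OF d x, of "Suc m"] by simp
  qed
  also have "\<dots> = step_bound d x 1 - step_bound d x (real N + 1)"
    using sum_lessThan_telescope'[of "\<lambda>m. step_bound d x (real (Suc m))" N] by (simp add: add.commute)
  also have "\<dots> \<le> 4 * (real d + 1)"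
  proof -
    have "0 \<le> x / (real N + 1)^2" using x by simp
    then show ?thesis unfolding step_bound_def min_def by auto
  qed
  finally show ?thesis .
qed

lemma W_approx:
  assumes d: "d \<ge> 1" and x: "x > 0"
  shows "\<bar>W d x - f d * sqrt x\<bar> \<le> 17 * real d"
proof -
  define N where "N = nat \<lfloor>x\<rfloor>"
  have N: "real N \<le> x" unfolding N_def using x by linarith
  define t where "t m = x / (real (Suc m) * real (Suc (Suc m)))" for m
  define v where "v m = frac (x / real (Suc m))" for m
  have "\<bar>\<Sum>m<N. ramp d (t m) * (v m - v (Suc m))\<bar> \<le> 4"
  proof (rule ramp_abel_sum_bound)
    show "t (Suc m) \<le> t m" for m unfolding t_def using x by (intro divide_left_mono mult_mono) auto
    show "0 \<le> v m" "v m \<le> 1" for m unfolding v_def by (simp_all add: frac_ge_0 less_imp_le[OF frac_lt_1])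
  qed
  moreover have "W d x = (\<Sum>m<N. hump d (t m)) + (\<Sum>m<N. ramp d (t m) * (v m - v (Suc m)))"
    unfolding W_eq_hump_ramp_sum[OF d x] N_def t_def v_def by (simp add: sum.distrib)
  moreover have "\<bar>(\<Sum>m<N. hump d (t m)) - (\<Sum>m<N. hump d (x / (real (Suc m) + 1/2)^2))\<bar> \<le> real d + 1"
    unfolding t_def by (rule hump_sum_midpoint_shift[OF x])
  moreover note hump_sum_integral_approx[OF d x N]
    hump_prim_at_end[OF d x, folded N_def] hump_prim_at_1[OF d x]
  ultimately have "\<bar>W d x - f d * sqrt x\<bar> \<le> 4 + (real d + 1) + 4 * (real d + 1) + 2 + 1"
    by linarith
  also have "\<dots> \<le> 17 * real d" using d by simp
  finally show ?thesis .
qed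

theorem proposition6:
  shows "\<exists>C::real. \<forall>d::nat. \<forall>x::real. d \<ge> 1 \<longrightarrow> x > 0 \<longrightarrow>
           \<bar>W d x - f d * sqrt x\<bar> \<le> C * real d"
  using W_approx by blast

end
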